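(* Let $\mathsf{HAL}^{pa},\mathsf{HAL}^{p},\mathsf{HAL}^{a},\mathsf{HAL}$ be the symmetric functions with parameter $t$ uniquely determined by $$\mathsf{HAL}^{pa}=p_1\cdot\Bigl([\Sigma_t\operatorname{Assoc}]\circ\operatorname{Comm}\circ[p_1-t\,\mathsf{HAL}^{pa}]\Bigr),\qquad \mathsf{HAL}^{p}=p_1\cdot\Bigl([\Sigma_t\operatorname{Lie}]\circ\operatorname{Comm}\circ[p_1-t\,\mathsf{HAL}^{pa}]\Bigr),$$ $$\mathsf{HAL}^{a}=[\operatorname{Comm}-p_1]\circ[p_1-t\,\mathsf{HAL}^{pa}],\qquad \mathsf{HAL}=\mathsf{HAL}^{p}+\mathsf{HAL}^{a}-\mathsf{HAL}^{pa}.$$ Then $\mathsf{HAL}^{p}=p_1\,\partial_{p_1}\mathsf{HAL}$.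
   Context: Symmetric functions with a parameter $t$ are formal power series in $p_1,p_2,\dots$ (power sums) with coefficients in $\mathbb{Q}[t]$ (or $\mathbb{Q}[[t]]$); $\partial_{p_1}$ is the partial derivative with respect to $p_1$. Plethysm $\circ$ acts nontrivially on $t$: $p_k\circ f$ is obtained from $f$ by replacing each $p_j$ by $p_{jk}$ and $t$ by $t^k$ (rational constants are fixed), and $g\circ f$ is obtained by substituting $p_k\circ f$ for $p_k$ in $g$. The $t$-suspension is $\Sigma_t f=-\frac1t f(-t p_1,-t^2p_2,-t^3p_3,\dots)$. $\operatorname{Assoc}=p_1/(1-p_1)$ (so $\Sigma_t\operatorname{Assoc}=p_1/(1+tp_1)$), $\operatorname{Comm}=\exp\bigl(\sum_{k\ge1}p_k/k\bigr)-1$, and $\operatorname{Lie}=\sum_{k\ge1}\frac{\mu(k)}{k}\bigl(-\ln(1-p_k)\bigr)$ ($\mu$ the number-theoretic Möbius function) is the Frobenius characteristic of the Lie operad. *)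

theory Defs
  imports "HOL-Library.Multiset" "HOL-Computational_Algebra.Polynomial"
    "HOL-Computational_Algebra.Squarefree" "HOL-Computational_Algebra.Primes"
begin

text \<open>Symmetric functions with parameter t: formal power series in the power sums
  p_1, p_2, ... with coefficients in Q[t].  A series is represented by its coefficient
  function: the monomial p_lam = prod over the parts k of the multiset lam of p_k
  gets the coefficient (f lam) in Q[t].  Multisets containing 0 play no role.\<close>

type_synonym sf = "nat multiset \<Rightarrow> rat poly"

definition sf_one :: sf where
  "sf_one = (\<lambda>m. if m = {#} then 1 else 0)"

definition sf_p1 :: sf where
  "sf_p1 = (\<lambda>m. if m = {#1#} then 1 else 0)"

definition sf_add :: "sf \<Rightarrow> sf \<Rightarrow> sf" where
  "sf_add f g = (\<lambda>m. f m + g m)"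

definition sf_minus :: "sf \<Rightarrow> sf \<Rightarrow> sf" where
  "sf_minus f g = (\<lambda>m. f m - g m)"

definition sf_tmult :: "sf \<Rightarrow> sf" where
  "sf_tmult f = (\<lambda>m. [:0, 1:] * f m)"

definition sf_mult :: "sf \<Rightarrow> sf \<Rightarrow> sf" where
  "sf_mult f g = (\<lambda>m. \<Sum>a\<in>{a. a \<subseteq># m}. f a * g (m - a))"

definition sf_prod_list :: "sf list \<Rightarrow> sf" where
  "sf_prod_list fs = foldr sf_mult fs sf_one"

text \<open>p_k o f : replace p_j by p_(jk) and t by t^k\<close>
definition sf_pk :: "nat \<Rightarrow> sf \<Rightarrow> sf" where
  "sf_pk k f = (\<lambda>m. if (\<forall>j\<in>#m. k dvd j)
                     then pcompose (f (image_mset (\<lambda>j. j div k) m)) (monom 1 k) else 0)"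

text \<open>plethysm g o f (for f without constant term): substitute p_k o f for p_k in g.
  Only monomials p_a of g with weight(a) <= weight(m) and length(a) <= length(m)
  can contribute to the coefficient of p_m, so the sum is finite.\<close>
definition sf_pleth :: "sf \<Rightarrow> sf \<Rightarrow> sf" where
  "sf_pleth g f = (\<lambda>m. \<Sum>a\<in>{a. set_mset a \<subseteq> {1..sum_mset m} \<and> size a \<le> size m}.
       g a * sf_prod_list (map (\<lambda>k. sf_pk k f) (sorted_list_of_multiset a)) m)"

text \<open>t-suspension: Sigma_t f = -(1/t) f(-t p_1, -t^2 p_2, ...) (for f without constant term)\<close>
definition sf_susp :: "sf \<Rightarrow> sf" where
  "sf_susp f = (\<lambda>m. if m = {#} then 0
      else smult (- ((-1) ^ size m)) (monom 1 (sum_mset m - 1) * f m))"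

definition sf_dp1 :: "sf \<Rightarrow> sf" where
  "sf_dp1 f = (\<lambda>m. of_nat (count m 1 + 1) * f (add_mset 1 m))"

text \<open>Assoc = p_1/(1-p_1) = sum_(n>=1) p_1^n\<close>
definition sf_Assoc :: sf where
  "sf_Assoc = (\<lambda>m. if m \<noteq> {#} \<and> set_mset m \<subseteq> {1} then 1 else 0)"

definition zee :: "nat multiset \<Rightarrow> nat" where
  "zee m = (\<Prod>i\<in>set_mset m. i ^ count m i * fact (count m i))"

text \<open>Comm = exp(sum_k p_k/k) - 1 = sum over nonempty lam of p_lam / z_lam\<close>
definition sf_Comm :: sf where
  "sf_Comm = (\<lambda>m. if m = {#} \<or> 0 \<in># m then 0 else [: 1 / of_nat (zee m) :])"

definition mobius :: "nat \<Rightarrow> int" where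
  "mobius k = (if squarefree k then (-1) ^ card (prime_factors k) else 0)"

text \<open>Lie = sum_(k>=1) mu(k)/k (-ln(1-p_k)) = sum_(k,n>=1) mu(k)/(k n) p_k^n\<close>
definition sf_Lie :: sf where
  "sf_Lie = (\<lambda>m. \<Sum>k\<in>{1..sum_mset m}. \<Sum>n\<in>{1..size m}.
      if m = replicate_mset n k then [: of_int (mobius k) / of_nat (k * n) :] else 0)"

end

theory Submission
  imports Defs
begin

(* For an admissible series x
   (no constant term), g \<mapsto> g \<circ> x is a ring homomorphism, and \<partial> = \<partial>/\<partial>p\<^sub>1 is a derivation
   with the chain rule \<partial>(g \<circ> x) = (\<partial>g \<circ> x) \<partial>x, because p\<^sub>k \<circ> x does not involve p\<^sub>1 for k \<noteq> 1.
   Put u = p\<^sub>1 - t HAL\<^sup>p\<^sup>a and c = Comm \<circ> u, so that HAL\<^sup>p\<^sup>a = p\<^sub>1 (\<Sigma>Assoc \<circ> c) and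
   HAL\<^sup>a = c - u. Composing the one-variable identities
     (\<Sigma>Assoc)(1 + t p\<^sub>1) = p\<^sub>1,   (\<partial>\<Sigma>Lie)(1 + t p\<^sub>1) = 1,   \<partial>Comm = 1 + Comm
   with c and differentiating the defining equations yields linear relations between \<partial>c, \<partial>u
   and \<partial>HAL\<^sup>p\<^sup>a. Eliminating them gives \<partial>(HAL\<^sup>a - HAL\<^sup>p\<^sup>a) = -p\<^sub>1 (\<partial>\<Sigma>Lie \<circ> c) \<partial>c, that is
   \<partial>HAL = \<Sigma>Lie \<circ> c, and HAL\<^sup>p = p\<^sub>1 (\<Sigma>Lie \<circ> c) by definition. *)

section \<open>Finite sums over multisets\<close>

lemma finite_submultisets: "finite {a. a \<subseteq># (m::'a multiset)}"
proof -
  have "{a. a \<subseteq># m} \<subseteq> (\<Union>k\<le>size m. multisets_of_size (set_mset m) k)"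
    by (auto simp: multisets_of_size_def size_mset_mono dest: mset_subset_eqD)
  moreover have "finite (\<Union>k\<le>size m. multisets_of_size (set_mset m) k)" by auto
  ultimately show ?thesis by (rule finite_subset)
qed

lemma sum_submultisets_swap:
  "(\<Sum>a | a \<subseteq># m. F a (m - a)) = (\<Sum>a | a \<subseteq># m. F (m - a) (a::'a multiset))"
  by (rule sum.reindex_bij_witness[where i="\<lambda>a. m - a" and j="\<lambda>a. m - a"])
     (auto simp: subset_mset.diff_diff_right)

lemma sum_submultisets_count_add_mset:
  fixes F :: "'a multiset \<Rightarrow> 'a multiset \<Rightarrow> 'b::semiring_1"
  shows "(\<Sum>a | a \<subseteq># add_mset x m. of_nat (count a x) * F a (add_mset x m - a))
       = (\<Sum>a | a \<subseteq># m. of_nat (count a x + 1) * F (add_mset x a) (m - a))"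
proof -
  have "(\<Sum>a | a \<subseteq># add_mset x m. of_nat (count a x) * F a (add_mset x m - a))
      = (\<Sum>a | a \<subseteq># add_mset x m \<and> x \<in># a. of_nat (count a x) * F a (add_mset x m - a))"
    by (rule sum.mono_neutral_right) (auto simp: finite_submultisets not_in_iff)
  also have "\<dots> = (\<Sum>a | a \<subseteq># m. of_nat (count a x + 1) * F (add_mset x a) (m - a))"
    by (rule sum.reindex_bij_witness[where j="\<lambda>a. a - {#x#}" and i="add_mset x"])
       (auto simp: subset_eq_diff_conv insert_DiffM2,
        metis add_mset_diff_bothsides insert_DiffM)
  finally show ?thesis .
qed

definition bounded_msets :: "nat \<Rightarrow> nat \<Rightarrow> nat multiset set" where
  "bounded_msets N n = {a. set_mset a \<subseteq> {1..N} \<and> size a \<le> n}"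

lemma finite_bounded_msets: "finite (bounded_msets N n)"
proof -
  have "bounded_msets N n \<subseteq> (\<Union>k\<le>n. multisets_of_size {1..N} k)"
    by (auto simp: bounded_msets_def multisets_of_size_def)
  moreover have "finite (\<Union>k\<le>n. multisets_of_size {1..N} k)" by auto
  ultimately show ?thesis by (rule finite_subset)
qed

lemma submultiset_sum_size:
  assumes "b \<subseteq># (m::nat multiset)"
  shows "sum_mset b + sum_mset (m - b) = sum_mset m" "size b + size (m - b) = size m"
  using assms by (metis subset_mset.add_diff_inverse sum_mset.union size_union)+

lemma sum_mset_eq_size: "set_mset m \<subseteq> {1} \<Longrightarrow> sum_mset m = size (m :: nat multiset)"
  by (induction m) auto

section \<open>The ring of symmetric functions\<close>

lemma sf_mult_commute: "sf_mult f g = sf_mult g f"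
  unfolding sf_mult_def by (subst sum_submultisets_swap) (simp add: mult.commute)

lemma sf_mult_assoc: "sf_mult (sf_mult f g) h = sf_mult f (sf_mult g h)"
proof
  fix m :: "nat multiset"
  have "sf_mult (sf_mult f g) h m
      = (\<Sum>(c, a) \<in> Sigma {c. c \<subseteq># m} (\<lambda>c. {a. a \<subseteq># c}). f a * g (c - a) * h (m - c))"
    unfolding sf_mult_def sum_distrib_right by (rule sum.Sigma) (auto simp: finite_submultisets)
  also have "\<dots> = (\<Sum>(a, b) | a + b \<subseteq># m. f a * g b * h (m - (a + b)))"
    by (rule sum.reindex_bij_witness[where i="\<lambda>(a, b). (a + b, a)" and j="\<lambda>(c, a). (a, c - a)"])
       (auto simp: subset_mset.add_diff_inverse intro: subset_mset.order_trans)
  also have "\<dots> = (\<Sum>(a, b) \<in> Sigma {a. a \<subseteq># m} (\<lambda>a. {b. b \<subseteq># m - a}). f a * g b * h (m - a - b))"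
    by (rule sum.cong)
       (auto simp: subset_mset.le_diff_conv2 add.commute
             intro: subset_mset.order_trans[OF mset_subset_eq_add_left],
        metis add.commute subset_mset.le_diff_conv2 mset_subset_eq_add_left subset_mset.order_trans)
  also have "\<dots> = sf_mult f (sf_mult g h) m"
    unfolding sf_mult_def sum_distrib_left mult.assoc[symmetric]
    by (rule sum.Sigma[symmetric]) (auto simp: finite_submultisets)
  finally show "sf_mult (sf_mult f g) h m = sf_mult f (sf_mult g h) m" .
qed

lemma sf_mult_one: "sf_mult sf_one g = g"
proof
  fix m :: "nat multiset"
  have "sf_mult sf_one g m = (\<Sum>a | a \<subseteq># m. if a = {#} then g (m - a) else 0)"
    unfolding sf_mult_def sf_one_def by (rule sum.cong) auto
  then show "sf_mult sf_one g m = g m" by (simp add: sum.delta[OF finite_submultisets])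
qed

lemma sf_mult_add: "sf_mult (sf_add f g) h = sf_add (sf_mult f h) (sf_mult g h)"
  unfolding sf_mult_def sf_add_def by (auto simp: ring_distribs sum.distrib)

typedef symfun = "UNIV :: sf set" morphisms sf_of symfun_of by simp

setup_lifting type_definition_symfun

instantiation symfun :: comm_ring_1
begin
lift_definition zero_symfun :: symfun is "\<lambda>_. 0" .
lift_definition one_symfun :: symfun is sf_one .
lift_definition plus_symfun :: "symfun \<Rightarrow> symfun \<Rightarrow> symfun" is sf_add .
lift_definition minus_symfun :: "symfun \<Rightarrow> symfun \<Rightarrow> symfun" is sf_minus .
lift_definition uminus_symfun :: "symfun \<Rightarrow> symfun" is "\<lambda>f m. - f m" .
lift_definition times_symfun :: "symfun \<Rightarrow> symfun \<Rightarrow> symfun" is sf_mult .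
instance
proof
  fix a b c :: symfun
  show "a * b * c = a * (b * c)" by transfer (rule sf_mult_assoc)
  show "a * b = b * a" by transfer (rule sf_mult_commute)
  show "1 * a = a" by transfer (rule sf_mult_one)
  show "(a + b) * c = a * c + b * c" by transfer (rule sf_mult_add)
  show "a + b + c = a + (b + c)" by transfer (auto simp: sf_add_def add.assoc)
  show "a + b = b + a" by transfer (auto simp: sf_add_def add.commute)
  show "0 + a = a" by transfer (auto simp: sf_add_def)
  show "- a + a = 0" by transfer (auto simp: sf_add_def)
  show "a - b = a + - b" by transfer (auto simp: sf_add_def sf_minus_def)
  show "(0::symfun) \<noteq> 1" by transfer (auto simp: sf_one_def fun_eq_iff)
qed
end

lemma sf_of_add: "sf_of (x + y) m = sf_of x m + sf_of y m"
  by (simp add: plus_symfun.rep_eq sf_add_def)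

lemma sf_of_diff: "sf_of (x - y) m = sf_of x m - sf_of y m"
  by (simp add: minus_symfun.rep_eq sf_minus_def)

lemma sf_of_zero: "sf_of 0 m = 0"
  by (simp add: zero_symfun.rep_eq)

lemma sf_of_one: "sf_of 1 m = (if m = {#} then 1 else 0)"
  by (simp add: one_symfun.rep_eq sf_one_def)

lemma sf_of_mult: "sf_of (x * y) m = (\<Sum>a | a \<subseteq># m. sf_of x a * sf_of y (m - a))"
  by (simp add: times_symfun.rep_eq sf_mult_def)

lemma sf_of_of_nat_mult: "sf_of (of_nat n * x) m = of_nat n * sf_of x m"
  by (induction n) (auto simp: sf_of_add sf_of_zero ring_distribs)

lemma symfun_eqI: "(\<And>m. sf_of x m = sf_of y m) \<Longrightarrow> x = y"
  by (metis ext sf_of_inject)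

lift_definition p1 :: symfun is sf_p1 .

lift_definition param_t :: symfun is "\<lambda>m. if m = {#} then [:0, 1:] else 0" .

lemma sf_of_param_t_mult: "sf_of (param_t * x) m = [:0, 1:] * sf_of x m"
proof -
  have "sf_of (param_t * x) m = (\<Sum>a | a \<subseteq># m. if a = {#} then [:0, 1:] * sf_of x (m - a) else 0)"
    unfolding sf_of_mult by (rule sum.cong) (auto simp: param_t.rep_eq)
  then show ?thesis by (simp add: sum.delta[OF finite_submultisets])
qed

lemma sf_of_p1_mult: "sf_of (p1 * x) m = (if 1 \<in># m then sf_of x (m - {#1#}) else 0)"
proof -
  have "sf_of (p1 * x) m = (\<Sum>a | a \<subseteq># m. if a = {#1#} then sf_of x (m - a) else 0)"
    unfolding sf_of_mult by (rule sum.cong) (auto simp: p1.rep_eq sf_p1_def)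
  then show ?thesis by (simp add: sum.delta[OF finite_submultisets])
qed

lift_definition tmult :: "symfun \<Rightarrow> symfun" is sf_tmult .

lemma tmult_eq_param_t_mult: "tmult x = param_t * x"
  by (rule symfun_eqI) (simp add: sf_of_param_t_mult tmult.rep_eq sf_tmult_def)

lemma sf_dp1_mult: "sf_dp1 (sf_mult f g) = sf_add (sf_mult (sf_dp1 f) g) (sf_mult f (sf_dp1 g))"
proof
  fix m :: "nat multiset"
  define M where "M = add_mset 1 m"
  have "sf_dp1 (sf_mult f g) m = (\<Sum>a | a \<subseteq># M. of_nat (count M 1) * (f a * g (M - a)))"
    unfolding sf_dp1_def sf_mult_def M_def by (simp add: sum_distrib_left)
  also have "\<dots> = (\<Sum>a | a \<subseteq># M. of_nat (count a 1) * (f a * g (M - a)))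
                 + (\<Sum>a | a \<subseteq># M. of_nat (count (M - a) 1) * (f a * g (M - a)))"
    unfolding sum.distrib[symmetric]
    by (rule sum.cong) (auto simp: subseteq_mset_def ring_distribs simp flip: of_nat_add)
  also have "(\<Sum>a | a \<subseteq># M. of_nat (count a 1) * (f a * g (M - a)))
       = (\<Sum>a | a \<subseteq># m. of_nat (count a 1 + 1) * (f (add_mset 1 a) * g (m - a)))"
    unfolding M_def by (rule sum_submultisets_count_add_mset[where F="\<lambda>a b. f a * g b"])
  also have "\<dots> = sf_mult (sf_dp1 f) g m"
    unfolding sf_mult_def sf_dp1_def by (simp add: mult.assoc)
  also have "(\<Sum>a | a \<subseteq># M. of_nat (count (M - a) 1) * (f a * g (M - a)))
       = (\<Sum>a | a \<subseteq># M. of_nat (count a 1) * (f (M - a) * g a))"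
    by (rule sum_submultisets_swap[where F="\<lambda>a b. of_nat (count b 1) * (f a * g b)"])
  also have "\<dots> = (\<Sum>a | a \<subseteq># m. of_nat (count a 1 + 1) * (f (m - a) * g (add_mset 1 a)))"
    unfolding M_def by (rule sum_submultisets_count_add_mset[where F="\<lambda>a b. f b * g a"])
  also have "\<dots> = (\<Sum>a | a \<subseteq># m. of_nat (count (m - a) 1 + 1) * (f a * g (add_mset 1 (m - a))))"
    by (rule sum_submultisets_swap[where F="\<lambda>x y. of_nat (count y 1 + 1) * (f x * g (add_mset 1 y))", symmetric])
  also have "\<dots> = sf_mult f (sf_dp1 g) m"
    unfolding sf_mult_def sf_dp1_def by (simp add: mult.left_commute)
  finally show "sf_dp1 (sf_mult f g) m = sf_add (sf_mult (sf_dp1 f) g) (sf_mult f (sf_dp1 g)) m"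
    by (simp add: sf_add_def)
qed

lift_definition dp1 :: "symfun \<Rightarrow> symfun" is sf_dp1 .

lemma sf_of_dp1: "sf_of (dp1 y) m = of_nat (count m 1 + 1) * sf_of y (add_mset 1 m)"
  by (simp add: dp1.rep_eq sf_dp1_def)

lemma dp1_mult: "dp1 (x * y) = dp1 x * y + x * dp1 y"
  by transfer (rule sf_dp1_mult)

lemma dp1_add: "dp1 (x + y) = dp1 x + dp1 y"
  by transfer (auto simp: sf_dp1_def sf_add_def ring_distribs)

lemma dp1_diff: "dp1 (x - y) = dp1 x - dp1 y"
  by transfer (auto simp: sf_dp1_def sf_minus_def ring_distribs)

lemma dp1_one: "dp1 1 = 0"
  by transfer (auto simp: sf_dp1_def sf_one_def)

lemma dp1_p1: "dp1 p1 = 1"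
  by transfer (auto simp: sf_dp1_def sf_one_def sf_p1_def fun_eq_iff)

lemma dp1_param_t: "dp1 param_t = 0"
  by transfer (auto simp: sf_dp1_def fun_eq_iff)

section \<open>Plethysm\<close>

lift_definition adams :: "nat \<Rightarrow> symfun \<Rightarrow> symfun" is sf_pk .

lemma adams_1: "adams 1 x = x"
  by transfer (simp add: sf_pk_def fun_eq_iff monom_Suc monom_0)

lemma dp1_adams: "k \<noteq> 1 \<Longrightarrow> dp1 (adams k x) = 0"
  by (rule symfun_eqI) (auto simp: sf_of_dp1 adams.rep_eq sf_pk_def sf_of_zero)

definition pleth_monom :: "symfun \<Rightarrow> nat multiset \<Rightarrow> symfun" where
  "pleth_monom x a = (\<Prod>k\<in>#a. adams k x)"

lemma pleth_monom_empty [simp]: "pleth_monom x {#} = 1"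
  by (simp add: pleth_monom_def)

lemma pleth_monom_add_mset: "pleth_monom x (add_mset k a) = adams k x * pleth_monom x a"
  by (simp add: pleth_monom_def)

lemma pleth_monom_union: "pleth_monom x (a + b) = pleth_monom x a * pleth_monom x b"
  by (simp add: pleth_monom_def)

lemma sf_prod_list_adams:
  "sf_prod_list (map (\<lambda>k. sf_pk k f) (sorted_list_of_multiset a)) = sf_of (pleth_monom (symfun_of f) a)"
proof -
  have "sf_prod_list (map (\<lambda>k. sf_pk k f) ks) = sf_of (\<Prod>k\<leftarrow>ks. adams k (symfun_of f))" for ks
    by (induction ks)
       (simp_all add: sf_prod_list_def one_symfun.rep_eq times_symfun.rep_eq adams.rep_eq symfun_of_inverse)
  then show ?thesis
    unfolding pleth_monom_def
    by (metis mset_map mset_sorted_list_of_multiset prod_mset_prod_list)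
qed

lift_definition pleth :: "symfun \<Rightarrow> symfun \<Rightarrow> symfun" is sf_pleth .

lemma sf_of_pleth:
  "sf_of (pleth g x) m = (\<Sum>a\<in>bounded_msets (sum_mset m) (size m). sf_of g a * sf_of (pleth_monom x a) m)"
  by (simp add: pleth.rep_eq sf_pleth_def bounded_msets_def sf_prod_list_adams sf_of_inverse)

text \<open>Coefficients of monomials with a part 0 are junk in this representation, but
  \<^const>\<open>sf_pk\<close> feeds them into plethysm: g \<circ> x behaves as expected only for series x
  without such coefficients and without constant term.\<close>

definition zero_part_free_upto :: "nat \<Rightarrow> symfun \<Rightarrow> bool" where
  "zero_part_free_upto n x \<longleftrightarrow> (\<forall>m. size m \<le> n \<longrightarrow> 0 \<in># m \<longrightarrow> sf_of x m = 0)"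

definition admissible :: "symfun \<Rightarrow> bool" where
  "admissible x \<longleftrightarrow> (\<forall>n. zero_part_free_upto n x) \<and> sf_of x {#} = 0"

lemma admissible_zero_part: "admissible x \<Longrightarrow> 0 \<in># m \<Longrightarrow> sf_of x m = 0"
  by (auto simp: admissible_def zero_part_free_upto_def)

lemma adams_coeff_nonzero:
  assumes "admissible x" "sf_of (adams k x) b \<noteq> 0"
  shows "b \<noteq> {#}" "j \<in># b \<Longrightarrow> k \<le> j"
proof -
  have nz: "sf_of x (image_mset (\<lambda>j. j div k) b) \<noteq> 0"
    using assms(2) unfolding adams.rep_eq sf_pk_def by (auto split: if_splits)
  show "b \<noteq> {#}" using nz assms(1) unfolding admissible_def by auto
  assume "j \<in># b"
  then have "j div k \<in># image_mset (\<lambda>j. j div k) b" by simp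
  then have "j div k \<noteq> 0" using admissible_zero_part[OF assms(1)] nz by metis
  then show "k \<le> j" by (simp add: div_eq_0_iff not_less)
qed

lemma pleth_monom_coeff_nonzero:
  assumes "admissible x" "sf_of (pleth_monom x a) m \<noteq> 0"
  shows "size a \<le> size m \<and> (\<forall>k\<in>#a. k \<le> sum_mset m)"
  using assms(2)
proof (induction a arbitrary: m)
  case (add k a)
  obtain b where b: "b \<subseteq># m" "sf_of (adams k x) b \<noteq> 0" "sf_of (pleth_monom x a) (m - b) \<noteq> 0"
    using add.prems unfolding pleth_monom_add_mset sf_of_mult
    by (metis (no_types, lifting) mem_Collect_eq mult_eq_0_iff sum.neutral)
  obtain j where j: "j \<in># b" using adams_coeff_nonzero(1)[OF assms(1) b(2)] by blast
  have "k \<le> j" using adams_coeff_nonzero(2)[OF assms(1) b(2) j] .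
  also have "j \<le> sum_mset b" using j by (metis le_add1 multi_member_split sum_mset.add_mset)
  finally have "k \<le> sum_mset b" .
  moreover have "size b \<ge> 1" using j by (metis One_nat_def Suc_le_eq nonempty_has_size empty_iff set_mset_empty)
  ultimately show ?case using add.IH[OF b(3)] submultiset_sum_size[OF b(1)] by auto
qed simp

lemma sf_of_pleth_bounded:
  assumes "admissible x" "sum_mset m \<le> N" "size m \<le> n"
  shows "sf_of (pleth g x) m = (\<Sum>a\<in>bounded_msets N n. sf_of g a * sf_of (pleth_monom x a) m)"
  unfolding sf_of_pleth
proof (rule sum.mono_neutral_left)
  show "bounded_msets (sum_mset m) (size m) \<subseteq> bounded_msets N n"
    using assms by (auto simp: bounded_msets_def)
  show "\<forall>a\<in>bounded_msets N n - bounded_msets (sum_mset m) (size m). sf_of g a * sf_of (pleth_monom x a) m = 0"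
  proof
    fix a assume a: "a \<in> bounded_msets N n - bounded_msets (sum_mset m) (size m)"
    have "\<not> (size a \<le> size m \<and> (\<forall>k\<in>#a. k \<le> sum_mset m))"
      using a by (auto simp: bounded_msets_def)
    then show "sf_of g a * sf_of (pleth_monom x a) m = 0"
      using pleth_monom_coeff_nonzero[OF assms(1)] by auto
  qed
qed (rule finite_bounded_msets)

lemma pleth_add: "pleth (g + h) x = pleth g x + pleth h x"
  by (rule symfun_eqI) (simp add: sf_of_pleth sf_of_add ring_distribs sum.distrib)

lemma pleth_diff: "pleth (g - h) x = pleth g x - pleth h x"
  by (rule symfun_eqI) (simp add: sf_of_pleth sf_of_diff ring_distribs sum_subtractf)

lemma pleth_param_t_mult: "pleth (param_t * g) x = param_t * pleth g x"
  by (rule symfun_eqI) (simp add: sf_of_pleth sf_of_param_t_mult sum_distrib_left mult.assoc)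

lemma pleth_one: "pleth 1 x = 1"
proof (rule symfun_eqI)
  fix m
  have "sf_of (pleth 1 x) m
      = (\<Sum>a\<in>bounded_msets (sum_mset m) (size m). if a = {#} then sf_of (pleth_monom x a) m else 0)"
    unfolding sf_of_pleth by (rule sum.cong) (auto simp: sf_of_one)
  also have "\<dots> = sf_of 1 m"
    by (subst sum.delta[OF finite_bounded_msets]) (simp add: bounded_msets_def sf_of_one)
  finally show "sf_of (pleth 1 x) m = sf_of 1 m" .
qed

lemma pleth_p1:
  assumes "admissible x" shows "pleth p1 x = x"
proof (rule symfun_eqI)
  fix m
  let ?B = "bounded_msets (max 1 (sum_mset m)) (max 1 (size m))"
  have "sf_of (pleth p1 x) m = (\<Sum>a\<in>?B. sf_of p1 a * sf_of (pleth_monom x a) m)"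
    by (rule sf_of_pleth_bounded[OF assms]) auto
  also have "\<dots> = (\<Sum>a\<in>?B. if a = {#1#} then sf_of (pleth_monom x a) m else 0)"
    by (rule sum.cong) (auto simp: p1.rep_eq sf_p1_def)
  also have "\<dots> = sf_of x m"
    by (subst sum.delta[OF finite_bounded_msets])
       (simp add: bounded_msets_def pleth_monom_add_mset adams_1[simplified])
  finally show "sf_of (pleth p1 x) m = sf_of x m" .
qed

lemma sf_of_pleth_mult_double_sum:
  fixes m :: "nat multiset"
  assumes "admissible x"
  defines "B \<equiv> bounded_msets (sum_mset m) (size m)"
  shows "sf_of (pleth (g * h) x) m
       = (\<Sum>(a1, a2) \<in> B \<times> B. sf_of g a1 * sf_of h a2 * sf_of (pleth_monom x a1 * pleth_monom x a2) m)"
proof -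
  let ?Q = "\<lambda>a1 a2. sf_of g a1 * sf_of h a2 * sf_of (pleth_monom x a1 * pleth_monom x a2) m"
  have finB: "finite B" by (simp add: B_def finite_bounded_msets)
  have "sf_of (pleth (g * h) x) m
      = (\<Sum>a\<in>B. (\<Sum>a1 | a1 \<subseteq># a. sf_of g a1 * sf_of h (a - a1)) * sf_of (pleth_monom x a) m)"
    unfolding sf_of_pleth B_def sf_of_mult ..
  also have "\<dots> = (\<Sum>a\<in>B. \<Sum>a1 | a1 \<subseteq># a. ?Q a1 (a - a1))"
    unfolding sum_distrib_right
    by (intro sum.cong refl)
       (simp add: pleth_monom_union[symmetric] subset_mset.add_diff_inverse)
  also have "\<dots> = (\<Sum>(a1, a2) | a1 + a2 \<in> B. ?Q a1 a2)"
    by (subst sum.Sigma)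
       (auto simp: finB finite_submultisets subset_mset.add_diff_inverse
             intro!: sum.reindex_bij_witness[where i="\<lambda>(a1, a2). (a1 + a2, a1)" and j="\<lambda>(a, a1). (a1, a - a1)"])
  also have "\<dots> = (\<Sum>(a1, a2) \<in> B \<times> B. ?Q a1 a2)"
  proof (rule sum.mono_neutral_left)
    show "{(a1, a2). a1 + a2 \<in> B} \<subseteq> B \<times> B" by (auto simp: B_def bounded_msets_def)
    show "\<forall>i\<in>B \<times> B - {(a1, a2). a1 + a2 \<in> B}. (case i of (a1, a2) \<Rightarrow> ?Q a1 a2) = 0"
    proof
      fix i assume i: "i \<in> B \<times> B - {(a1, a2). a1 + a2 \<in> B}"
      obtain a1 a2 where i_eq: "i = (a1, a2)" by (cases i)
      have "a1 \<in> B" "a2 \<in> B" "a1 + a2 \<notin> B" using i i_eq by auto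
      then have "\<not> (size (a1 + a2) \<le> size m \<and> (\<forall>k\<in>#a1 + a2. k \<le> sum_mset m))"
        by (auto simp: B_def bounded_msets_def)
      then have "sf_of (pleth_monom x (a1 + a2)) m = 0"
        using pleth_monom_coeff_nonzero[OF assms(1)] by blast
      then show "(case i of (a1, a2) \<Rightarrow> ?Q a1 a2) = 0" by (simp add: i_eq pleth_monom_union)
    qed
  qed (use finB in simp)
  finally show ?thesis .
qed

lemma pleth_mult:
  assumes "admissible x" shows "pleth (g * h) x = pleth g x * pleth h x"
proof (rule symfun_eqI)
  fix m
  define B where "B = bounded_msets (sum_mset m) (size m)"
  let ?G = "sf_of g" and ?H = "sf_of h"
  have "sf_of (pleth (g * h) x) m = (\<Sum>b | b \<subseteq># m. \<Sum>a1\<in>B. \<Sum>a2\<in>B.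
           (?G a1 * sf_of (pleth_monom x a1) b) * (?H a2 * sf_of (pleth_monom x a2) (m - b)))"
    unfolding sf_of_pleth_mult_double_sum[OF assms] B_def[symmetric]
    by (simp add: sum.cartesian_product[symmetric] sf_of_mult sum_distrib_left
                  sum.swap[where B="{b. b \<subseteq># m}"] mult_ac)
  also have "\<dots> = (\<Sum>b | b \<subseteq># m. sf_of (pleth g x) b * sf_of (pleth h x) (m - b))"
  proof (rule sum.cong[OF refl])
    fix b assume "b \<in> {b. b \<subseteq># m}"
    then have "sum_mset b \<le> sum_mset m" "size b \<le> size m"
              "sum_mset (m - b) \<le> sum_mset m" "size (m - b) \<le> size m"
      using submultiset_sum_size[of b m] by auto
    then show "(\<Sum>a1\<in>B. \<Sum>a2\<in>B. (?G a1 * sf_of (pleth_monom x a1) b) * (?H a2 * sf_of (pleth_monom x a2) (m - b)))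
        = sf_of (pleth g x) b * sf_of (pleth h x) (m - b)"
      unfolding B_def by (simp add: sf_of_pleth_bounded[OF assms] sum_product)
  qed
  also have "\<dots> = sf_of (pleth g x * pleth h x) m" by (simp add: sf_of_mult)
  finally show "sf_of (pleth (g * h) x) m = sf_of (pleth g x * pleth h x) m" .
qed

lemma dp1_pleth_monom: "dp1 (pleth_monom x a) = of_nat (count a 1) * pleth_monom x (a - {#1#}) * dp1 x"
proof (induction a)
  case empty
  then show ?case by (simp add: dp1_one)
next
  case (add k a)
  show ?case
  proof (cases "k = 1")
    case True
    have "x * (of_nat (count a 1) * pleth_monom x (a - {#1#})) = of_nat (count a 1) * pleth_monom x a"
    proof (cases "1 \<in># a")
      case True
      then have "x * pleth_monom x (a - {#1#}) = pleth_monom x a"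
        by (metis pleth_monom_add_mset adams_1 insert_DiffM)
      then show ?thesis by (metis mult.left_commute)
    qed (simp add: not_in_iff)
    note x_times = this
    have "dp1 (x * pleth_monom x a)
        = dp1 x * pleth_monom x a + x * (of_nat (count a 1) * pleth_monom x (a - {#1#})) * dp1 x"
      by (simp only: dp1_mult add.IH mult.assoc)
    also have "\<dots> = (1 + of_nat (count a 1)) * pleth_monom x a * dp1 x"
      unfolding x_times by (simp add: algebra_simps)
    finally show ?thesis
      using True by (simp add: pleth_monom_add_mset adams_1[simplified])
  next
    case False
    then show ?thesis
      by (simp add: pleth_monom_add_mset dp1_mult add.IH dp1_adams mult_ac)
  qed
qed

lemma dp1_pleth:
  assumes "admissible x" shows "dp1 (pleth g x) = pleth (dp1 g) x * dp1 x"
proof (rule symfun_eqI)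
  fix m :: "nat multiset"
  define N where "N = sum_mset m + 1"
  define B where "B = bounded_msets N (size m + 1)"
  define B' where "B' = bounded_msets N (size m)"
  let ?G = "sf_of g"
  let ?R = "\<lambda>a. sf_of (pleth_monom x a * dp1 x) m"
  have "sf_of (dp1 (pleth g x)) m = of_nat (count m 1 + 1) * (\<Sum>a\<in>B. ?G a * sf_of (pleth_monom x a) (add_mset 1 m))"
    unfolding sf_of_dp1 B_def N_def by (subst sf_of_pleth_bounded[OF assms]) auto
  also have "\<dots> = (\<Sum>a\<in>B. ?G a * sf_of (dp1 (pleth_monom x a)) m)"
    by (simp add: sum_distrib_left sf_of_dp1 mult_ac)
  also have "\<dots> = (\<Sum>a\<in>B. of_nat (count a 1) * (?G a * ?R (a - {#1#})))"
    unfolding dp1_pleth_monom mult.assoc sf_of_of_nat_mult by (simp add: mult_ac)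
  also have "\<dots> = (\<Sum>a | a \<in> B \<and> 1 \<in># a. of_nat (count a 1) * (?G a * ?R (a - {#1#})))"
    by (rule sum.mono_neutral_right) (auto simp: B_def finite_bounded_msets not_in_iff)
  also have "\<dots> = (\<Sum>a\<in>B'. of_nat (count a 1 + 1) * (?G (add_mset 1 a) * ?R a))"
    by (rule sum.reindex_bij_witness[where j="\<lambda>a. a - {#1#}" and i="add_mset 1"])
       (auto simp: B_def B'_def N_def bounded_msets_def size_Diff_singleton dest: in_diffD)
  also have "\<dots> = (\<Sum>b | b \<subseteq># m. \<Sum>a\<in>B'. (sf_of (dp1 g) a * sf_of (pleth_monom x a) b) * sf_of (dp1 x) (m - b))"
    unfolding sf_of_mult sum_distrib_left sum.swap[where B="{b. b \<subseteq># m}"]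
    by (simp add: sf_of_dp1 mult_ac)
  also have "\<dots> = (\<Sum>b | b \<subseteq># m. sf_of (pleth (dp1 g) x) b * sf_of (dp1 x) (m - b))"
  proof (rule sum.cong[OF refl])
    fix b assume "b \<in> {b. b \<subseteq># m}"
    then have "sum_mset b \<le> N" "size b \<le> size m"
      using submultiset_sum_size[of b m] by (auto simp: N_def)
    then show "(\<Sum>a\<in>B'. (sf_of (dp1 g) a * sf_of (pleth_monom x a) b) * sf_of (dp1 x) (m - b))
        = sf_of (pleth (dp1 g) x) b * sf_of (dp1 x) (m - b)"
      unfolding B'_def by (simp add: sf_of_pleth_bounded[OF assms] sum_distrib_right)
  qed
  also have "\<dots> = sf_of (pleth (dp1 g) x * dp1 x) m" by (simp add: sf_of_mult)
  finally show "sf_of (dp1 (pleth g x)) m = sf_of (pleth (dp1 g) x * dp1 x) m" .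
qed

lemma zero_part_free_upto_0: "zero_part_free_upto 0 x"
  by (auto simp: zero_part_free_upto_def)

lemma zero_part_free_upto_diff:
  "zero_part_free_upto n x \<Longrightarrow> zero_part_free_upto n y \<Longrightarrow> zero_part_free_upto n (x - y)"
  by (simp add: zero_part_free_upto_def sf_of_diff)

lemma zero_part_free_upto_one: "zero_part_free_upto n 1"
  by (auto simp: zero_part_free_upto_def sf_of_one)

lemma zero_part_free_upto_p1: "zero_part_free_upto n p1"
  by (auto simp: zero_part_free_upto_def p1.rep_eq sf_p1_def)

lemma zero_part_free_upto_param_t: "zero_part_free_upto n param_t"
  by (auto simp: zero_part_free_upto_def param_t.rep_eq)

lemma zero_part_free_upto_mult:
  assumes "zero_part_free_upto n x" "zero_part_free_upto n y"
  shows "zero_part_free_upto n (x * y)"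
  unfolding zero_part_free_upto_def
proof (intro allI impI)
  fix m :: "nat multiset" assume m: "size m \<le> n" "0 \<in># m"
  show "sf_of (x * y) m = 0"
    unfolding sf_of_mult
  proof (rule sum.neutral, rule ballI)
    fix a assume "a \<in> {a. a \<subseteq># m}"
    then have "size a \<le> n" "size (m - a) \<le> n"
      using submultiset_sum_size[of a m] m by auto
    moreover have "0 \<in># a \<or> 0 \<in># m - a"
      using m(2) by (cases "0 \<in># a") (auto simp: in_diff_count not_in_iff)
    ultimately show "sf_of x a * sf_of y (m - a) = 0"
      using assms by (auto simp: zero_part_free_upto_def)
  qed
qed

lemma zero_part_free_upto_adams:
  assumes "zero_part_free_upto n x" shows "zero_part_free_upto n (adams k x)"
  unfolding zero_part_free_upto_def
proof (intro allI impI)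
  fix m :: "nat multiset" assume m: "size m \<le> n" "0 \<in># m"
  then have "size (image_mset (\<lambda>j. j div k) m) \<le> n" "0 \<in># image_mset (\<lambda>j. j div k) m"
    by force+
  then show "sf_of (adams k x) m = 0"
    using assms by (simp add: zero_part_free_upto_def adams.rep_eq sf_pk_def)
qed

lemma zero_part_free_upto_pleth_monom:
  "zero_part_free_upto n x \<Longrightarrow> zero_part_free_upto n (pleth_monom x a)"
  by (induction a)
     (simp_all add: zero_part_free_upto_one pleth_monom_add_mset zero_part_free_upto_mult
                    zero_part_free_upto_adams)

lemma zero_part_free_upto_pleth:
  "zero_part_free_upto n x \<Longrightarrow> zero_part_free_upto n (pleth g x)"
  using zero_part_free_upto_pleth_monom by (simp add: zero_part_free_upto_def sf_of_pleth)

lemma zero_part_free_upto_p1_mult: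
  assumes "zero_part_free_upto n y" shows "zero_part_free_upto (Suc n) (p1 * y)"
  unfolding zero_part_free_upto_def sf_of_p1_mult
proof (intro allI impI)
  fix m :: "nat multiset" assume m: "size m \<le> Suc n" "0 \<in># m"
  show "(if 1 \<in># m then sf_of y (m - {#1#}) else 0) = 0"
  proof (cases "1 \<in># m")
    case True
    then have "size (m - {#1#}) \<le> n" "0 \<in># m - {#1#}"
      using m by (auto simp: size_Diff_singleton in_diff_count)
    then show ?thesis using assms by (simp add: zero_part_free_upto_def)
  qed simp
qed

text \<open>Induction on the size bound, which multiplication by \<open>p\<^sub>1\<close> raises by one.\<close>

lemma zero_part_free_upto_p1_mult_fixpoint:
  assumes "y = p1 * z" "\<And>n. zero_part_free_upto n y \<Longrightarrow> zero_part_free_upto n z"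
  shows "zero_part_free_upto n y"
proof (induction n)
  case (Suc n)
  then show ?case by (subst assms(1)) (intro zero_part_free_upto_p1_mult assms(2))
qed (rule zero_part_free_upto_0)

lemma sf_of_pleth_empty: "sf_of (pleth g x) {#} = sf_of g {#}"
  by (simp add: sf_of_pleth bounded_msets_def sf_of_one)

lemma admissible_pleth: "admissible x \<Longrightarrow> sf_of g {#} = 0 \<Longrightarrow> admissible (pleth g x)"
  by (simp add: admissible_def sf_of_pleth_empty zero_part_free_upto_pleth)

section \<open>The series \<Sigma>Assoc, \<Sigma>Lie and Comm\<close>

definition p1_series :: "(nat \<Rightarrow> rat poly) \<Rightarrow> symfun" where
  "p1_series \<phi> = symfun_of (\<lambda>m. if set_mset m \<subseteq> {1} then \<phi> (size m) else 0)"

lemma sf_of_p1_series: "sf_of (p1_series \<phi>) m = (if set_mset m \<subseteq> {1} then \<phi> (size m) else 0)"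
  by (simp add: p1_series_def symfun_of_inverse)

lemma p1_series_mult_1_plus_t_p1:
  "p1_series \<phi> * (1 + param_t * p1) = p1_series (\<lambda>n. \<phi> n + (if n = 0 then 0 else [:0, 1:] * \<phi> (n - 1)))"
proof (rule symfun_eqI)
  fix m :: "nat multiset"
  have "p1_series \<phi> * (1 + param_t * p1) = p1_series \<phi> + param_t * (p1 * p1_series \<phi>)"
    by (simp add: algebra_simps)
  then have "sf_of (p1_series \<phi> * (1 + param_t * p1)) m
      = sf_of (p1_series \<phi>) m + [:0, 1:] * (if 1 \<in># m then sf_of (p1_series \<phi>) (m - {#1#}) else 0)"
    by (simp only: sf_of_add sf_of_param_t_mult sf_of_p1_mult)
  moreover have "set_mset (m - {#1#}) \<subseteq> {1} \<longleftrightarrow> set_mset m \<subseteq> {1}" if "1 \<in># m"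
    using that by (metis multi_member_split add_mset_remove_trivial insert_subset set_mset_add_mset_insert singletonI)
  moreover have "1 \<in># m \<longleftrightarrow> size m \<noteq> 0" if "set_mset m \<subseteq> {1}"
    using that by (cases m) auto
  ultimately show "sf_of (p1_series \<phi> * (1 + param_t * p1)) m = sf_of (p1_series (\<lambda>n. \<phi> n + (if n = 0 then 0 else [:0, 1:] * \<phi> (n - 1)))) m"
    by (auto simp: sf_of_p1_series size_Diff_singleton)
qed

lemma p1_series_eq_one: "p1_series (\<lambda>n. if n = 0 then 1 else 0) = 1"
  by (rule symfun_eqI) (auto simp: sf_of_p1_series sf_of_one)

lemma p1_series_eq_p1: "p1_series (\<lambda>n. if n = 1 then 1 else 0) = p1"
proof (rule symfun_eqI)
  fix m :: "nat multiset"
  have "set_mset m \<subseteq> {1} \<and> size m = 1 \<longleftrightarrow> m = {#1#}"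
  proof
    assume m: "set_mset m \<subseteq> {1} \<and> size m = 1"
    then obtain a where "m = {#a#}" by (metis size_1_singleton_mset)
    then show "m = {#1#}" using m by auto
  qed auto
  then show "sf_of (p1_series (\<lambda>n. if n = 1 then 1 else 0)) m = sf_of p1 m"
    by (auto simp: sf_of_p1_series p1.rep_eq sf_p1_def)
qed

lift_definition susp_Assoc :: symfun is "sf_susp sf_Assoc" .

lift_definition susp_Lie :: symfun is "sf_susp sf_Lie" .

lift_definition Comm :: symfun is sf_Comm .

lemma susp_Assoc_eq_p1_series:
  "susp_Assoc = p1_series (\<lambda>n. if n = 0 then 0 else monom (- ((-1) ^ n)) (n - 1))"
  by (rule symfun_eqI)
     (auto simp: susp_Assoc.rep_eq sf_susp_def sf_Assoc_def sf_of_p1_series smult_monom sum_mset_eq_size)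

lemma susp_Assoc_mult_1_plus_t_p1: "susp_Assoc * (1 + param_t * p1) = p1"
proof -
  have "(\<lambda>n. (if n = 0 then 0 else monom (- ((-1) ^ n)) (n - 1))
        + (if n = 0 then 0 else [:0, 1:] * (if n - 1 = 0 then 0 else monom (- ((-1) ^ (n - 1))) (n - 1 - 1))))
      = (\<lambda>n. if n = 1 then 1 else 0 :: rat poly)"
  proof
    fix n :: nat
    show "(if n = 0 then 0 else monom (- ((-1) ^ n)) (n - 1))
        + (if n = 0 then 0 else [:0, 1:] * (if n - 1 = 0 then 0 else monom (- ((-1) ^ (n - 1))) (n - 1 - 1)))
      = (if n = 1 then 1 else 0 :: rat poly)"
      by (induction n rule: nat_induct2) (simp_all add: monom_0 one_pCons monom_Suc add_monom)
  qed
  then show ?thesis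
    unfolding susp_Assoc_eq_p1_series p1_series_mult_1_plus_t_p1 by (simp only: p1_series_eq_p1)
qed

lemma dp1_susp_Assoc_mult_1_plus_t_p1: "dp1 susp_Assoc * (1 + param_t * p1) = 1 - param_t * susp_Assoc"
proof -
  have "dp1 (susp_Assoc * (1 + param_t * p1)) = 1"
    by (simp add: susp_Assoc_mult_1_plus_t_p1 dp1_p1)
  then have "dp1 susp_Assoc * (1 + param_t * p1) + susp_Assoc * param_t = 1"
    by (simp add: dp1_mult dp1_add dp1_one dp1_param_t dp1_p1)
  then show ?thesis by (simp add: algebra_simps eq_diff_eq)
qed

lemma sf_Lie_replicate_1:
  assumes "n \<ge> 1" shows "sf_Lie (replicate_mset n 1) = [:1 / of_nat n:]"
proof -
  have "replicate_mset n 1 = replicate_mset n' k \<longleftrightarrow> n' = n \<and> k = 1" for n' k :: nat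
  proof
    assume eq: "replicate_mset n 1 = replicate_mset n' k"
    then have "n' = n" by (metis size_replicate_mset)
    with eq show "n' = n \<and> k = 1" using assms by (metis One_nat_def in_replicate_mset le_numeral_extra(2) neq0_conv le_zero_eq)
  qed auto
  then have "sf_Lie (replicate_mset n 1)
      = (\<Sum>k\<in>{1..n}. \<Sum>n'\<in>{1..n}. if n' = n \<and> k = 1 then [:of_int (mobius k) / of_nat (k * n'):] else 0)"
    by (auto simp: sf_Lie_def sum_mset_replicate_mset intro!: sum.cong)
  also have "\<dots> = (\<Sum>k\<in>{1..n}. if k = 1 then [:of_int (mobius k) / of_nat (k * n):] else 0)"
  proof (rule sum.cong[OF refl])
    fix k show "(\<Sum>n'\<in>{1..n}. if n' = n \<and> k = 1 then [:of_int (mobius k) / of_nat (k * n'):] else 0)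
        = (if k = 1 then [:of_int (mobius k) / of_nat (k * n):] else 0)"
      using assms by (cases "k = 1") simp_all
  qed
  also have "\<dots> = [:1 / of_nat n:]"
    using assms by (simp add: mobius_def)
  finally show ?thesis .
qed

lemma sf_Lie_eq_0: assumes "1 \<in># m" "j \<in># m" "j \<noteq> 1" shows "sf_Lie m = 0"
proof -
  have "m \<noteq> replicate_mset n k" for n k
    using assms by (auto simp: in_replicate_mset split: if_splits)
  then show ?thesis by (simp add: sf_Lie_def)
qed

lemma dp1_susp_Lie_eq_p1_series: "dp1 susp_Lie = p1_series (\<lambda>n. monom ((-1) ^ n) n)"
proof (rule symfun_eqI)
  fix m :: "nat multiset"
  show "sf_of (dp1 susp_Lie) m = sf_of (p1_series (\<lambda>n. monom ((-1) ^ n) n)) m"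
  proof (cases "set_mset m \<subseteq> {1}")
    case True
    define n where "n = size m"
    have m: "m = replicate_mset n 1"
      unfolding n_def by (rule set_mset_subset_singletonD[OF True])
    then have "sf_Lie (add_mset 1 m) = [:1 / of_nat (n + 1):]"
      using sf_Lie_replicate_1[of "n + 1"] by simp
    then have "sf_of (dp1 susp_Lie) m
        = of_nat (n + 1) * smult (- ((-1) ^ (n + 1))) (monom 1 n * [:1 / of_nat (n + 1):])"
      by (simp add: sf_of_dp1 susp_Lie.rep_eq sf_susp_def m sum_mset_replicate_mset)
    also have "monom 1 n * [:1 / of_nat (n + 1):] = monom (1 / of_nat (n + 1) :: rat) n"
      by (simp add: mult.commute[of "monom _ _"] smult_monom)
    also have "of_nat (n + 1) * smult (- ((-1) ^ (n + 1))) (monom (1 / of_nat (n + 1)) n)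
        = (monom ((-1) ^ n) n :: rat poly)"
      by (simp add: of_nat_mult_conv_smult smult_monom del: of_nat_add of_nat_Suc)
    finally show ?thesis using True by (simp add: sf_of_p1_series n_def)
  next
    case False
    then obtain j where "j \<in># m" "j \<noteq> 1" by auto
    then have "sf_Lie (add_mset 1 m) = 0" by (intro sf_Lie_eq_0[of _ j]) auto
    then show ?thesis using False by (simp add: sf_of_dp1 susp_Lie.rep_eq sf_susp_def sf_of_p1_series)
  qed
qed

lemma dp1_susp_Lie_mult_1_plus_t_p1: "dp1 susp_Lie * (1 + param_t * p1) = 1"
proof -
  have "(\<lambda>n. monom ((-1) ^ n) n + (if n = 0 then 0 else [:0, 1:] * monom ((-1) ^ (n - 1)) (n - 1)))
      = (\<lambda>n. if n = 0 then 1 else 0 :: rat poly)"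
  proof
    fix n :: nat
    show "monom ((-1) ^ n) n + (if n = 0 then 0 else [:0, 1:] * monom ((-1) ^ (n - 1)) (n - 1))
      = (if n = 0 then 1 else 0 :: rat poly)"
      by (cases n) (simp_all add: monom_0 one_pCons monom_Suc add_monom)
  qed
  then show ?thesis
    unfolding dp1_susp_Lie_eq_p1_series p1_series_mult_1_plus_t_p1 by (simp only: p1_series_eq_one)
qed

lemma zee_add_mset_1: "zee (add_mset 1 m) = (count m 1 + 1) * zee m"
proof -
  let ?F = "\<lambda>m i. i ^ count m i * fact (count m i) :: nat"
  have split: "zee m' = fact (count m' 1) * (\<Prod>i\<in>set_mset m' - {1}. ?F m' i)" for m'
  proof (cases "1 \<in># m'")
    case True
    then show ?thesis unfolding zee_def by (subst prod.remove[of _ 1]) auto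
  next
    case False
    then show ?thesis unfolding zee_def by (simp add: not_in_iff)
  qed
  have "(\<Prod>i\<in>set_mset (add_mset 1 m) - {1}. ?F (add_mset 1 m) i) = (\<Prod>i\<in>set_mset m - {1}. ?F m i)"
    by (intro prod.cong) auto
  then show ?thesis unfolding split[of "add_mset 1 m"] split[of m] by (simp add: algebra_simps)
qed

lemma dp1_Comm: "dp1 Comm = 1 + Comm"
proof (rule symfun_eqI)
  fix m :: "nat multiset"
  have "of_nat (count m 1 + 1) * (1 / of_nat (zee (add_mset 1 m))) = (1 / of_nat (zee m) :: rat)"
    unfolding zee_add_mset_1 of_nat_mult times_divide_eq_right mult_1_right
    by (rule nonzero_divide_mult_cancel_left) simp
  moreover have "(of_nat k :: rat poly) * [:r:] = [:of_nat k * r:]" for k r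
    by (simp add: of_nat_poly)
  ultimately have "(of_nat (count m 1 + 1) :: rat poly) * [:1 / of_nat (zee (add_mset 1 m)):] = [:1 / of_nat (zee m):]"
    by (simp only:)
  then show "sf_of (dp1 Comm) m = sf_of (1 + Comm) m"
    by (auto simp: sf_of_dp1 Comm.rep_eq sf_Comm_def sf_of_add sf_of_one zee_def one_pCons)
qed

section \<open>The derivative of HAL\<close>

lemma HAL_derivative_identity:
  fixes p t c S E L dc du dh :: "'a::comm_ring_1"
  assumes S: "S * (1 + t * c) = c"
    and E: "E * (1 + t * c) = 1 - t * S"
    and L: "L * (1 + t * c) = 1"
    and dc: "dc = (1 + c) * du"
    and du: "du = 1 - t * dh"
    and dh: "dh = S + p * (E * dc)"
  shows "p * (L * dc) + dc - du - dh = 0"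
proof -
  let ?q = "1 + t * c"
  have "?q * dh = S * ?q + p * (E * ?q) * dc"
    unfolding dh by (simp add: algebra_simps)
  also have "\<dots> = c + p * (1 - t * S) * dc"
    unfolding S E ..
  finally have q_dh: "?q * dh = c + p * (1 - t * S) * dc" .
  have "?q * du = ?q - t * (?q * dh)"
    unfolding du by (simp add: algebra_simps)
  also have "\<dots> = 1 - t * p * (1 - t * S) * dc"
    unfolding q_dh by (simp add: algebra_simps)
  finally have q_du: "?q * du = 1 - t * p * (1 - t * S) * dc" .
  have "?q * (p * (L * dc) + dc - du - dh) = p * dc * (L * ?q) + c * (?q * du) - ?q * dh"
    by (simp add: dc algebra_simps)
  also have "\<dots> = t * p * dc * (S * ?q - c)"
    unfolding L q_du q_dh by (simp add: algebra_simps)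
  also have "\<dots> = 0"
    unfolding S by simp
  finally have "?q * (p * (L * dc) + dc - du - dh) = 0" .
  then have "(L * ?q) * (p * (L * dc) + dc - du - dh) = 0"
    by (simp only: mult.assoc mult_zero_right)
  then show ?thesis unfolding L by simp
qed

lemma admissible_HAL_argument:
  assumes "hpa = p1 * pleth susp_Assoc (pleth Comm (p1 - param_t * hpa))"
  shows "admissible (p1 - param_t * hpa)"
proof -
  have "zero_part_free_upto n hpa" for n
    using assms
    by (rule zero_part_free_upto_p1_mult_fixpoint)
       (intro zero_part_free_upto_pleth zero_part_free_upto_diff zero_part_free_upto_mult
              zero_part_free_upto_p1 zero_part_free_upto_param_t)
  moreover have "sf_of hpa {#} = 0"
    by (subst assms) (simp add: sf_of_p1_mult)
  ultimately show ?thesis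
    by (simp add: admissible_def zero_part_free_upto_diff zero_part_free_upto_mult
                  zero_part_free_upto_p1 zero_part_free_upto_param_t sf_of_diff
                  sf_of_param_t_mult p1.rep_eq sf_p1_def)
qed

lemma pleth_mult_1_plus_t_p1:
  assumes "admissible x" shows "pleth g x * (1 + param_t * x) = pleth (g * (1 + param_t * p1)) x"
proof -
  have "pleth (1 + param_t * p1) x = 1 + param_t * x"
    by (simp add: pleth_add pleth_one pleth_param_t_mult pleth_p1[OF assms])
  then show ?thesis by (simp only: pleth_mult[OF assms, of g "1 + param_t * p1"])
qed

theorem dp1_HAL:
  fixes hpa :: symfun
  defines "u \<equiv> p1 - param_t * hpa"
  defines "c \<equiv> pleth Comm u"
  assumes hpa: "hpa = p1 * pleth susp_Assoc c"
  shows "dp1 (p1 * pleth susp_Lie c + pleth (Comm - p1) u - hpa) = pleth susp_Lie c"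
proof -
  have u: "admissible u"
    using admissible_HAL_argument hpa unfolding u_def c_def by blast
  have c: "admissible c"
    unfolding c_def by (rule admissible_pleth[OF u]) (simp add: Comm.rep_eq sf_Comm_def)
  have identity: "p1 * (pleth (dp1 susp_Lie) c * dp1 c) + dp1 c - dp1 u - dp1 hpa = 0"
  proof (rule HAL_derivative_identity[where S = "pleth susp_Assoc c" and E = "pleth (dp1 susp_Assoc) c"])
    show "pleth susp_Assoc c * (1 + param_t * c) = c"
      unfolding pleth_mult_1_plus_t_p1[OF c] susp_Assoc_mult_1_plus_t_p1 by (rule pleth_p1[OF c])
    show "pleth (dp1 susp_Assoc) c * (1 + param_t * c) = 1 - param_t * pleth susp_Assoc c"
      unfolding pleth_mult_1_plus_t_p1[OF c] dp1_susp_Assoc_mult_1_plus_t_p1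
      by (simp add: pleth_diff pleth_one pleth_param_t_mult)
    show "pleth (dp1 susp_Lie) c * (1 + param_t * c) = 1"
      unfolding pleth_mult_1_plus_t_p1[OF c] dp1_susp_Lie_mult_1_plus_t_p1 by (rule pleth_one)
    show "dp1 c = (1 + c) * dp1 u"
      unfolding c_def dp1_pleth[OF u] dp1_Comm by (simp add: pleth_add pleth_one)
    show "dp1 u = 1 - param_t * dp1 hpa"
      by (simp add: u_def dp1_diff dp1_mult dp1_p1 dp1_param_t)
    show "dp1 hpa = pleth susp_Assoc c + p1 * (pleth (dp1 susp_Assoc) c * dp1 c)"
      by (subst hpa) (simp add: dp1_mult dp1_p1 dp1_pleth[OF c])
  qed
  have HAL_a: "pleth (Comm - p1) u = c - u"
    by (simp add: pleth_diff pleth_p1[OF u] c_def)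
  have "dp1 (p1 * pleth susp_Lie c + pleth (Comm - p1) u - hpa)
      = pleth susp_Lie c + (p1 * (pleth (dp1 susp_Lie) c * dp1 c) + dp1 c - dp1 u - dp1 hpa)"
    unfolding HAL_a by (simp add: dp1_add dp1_diff dp1_mult dp1_p1 dp1_pleth[OF c] algebra_simps)
  also have "\<dots> = pleth susp_Lie c"
    using identity by simp
  finally show ?thesis .
qed

lemma HAL_p_eq_p1_dp1_HAL:
  fixes hpa hp ha h :: symfun
  assumes "hpa = p1 * pleth susp_Assoc (pleth Comm (p1 - tmult hpa))"
    and "hp = p1 * pleth susp_Lie (pleth Comm (p1 - tmult hpa))"
    and "ha = pleth (Comm - p1) (p1 - tmult hpa)"
    and "h = hp + ha - hpa"
  shows "hp = p1 * dp1 h"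
  using dp1_HAL[of hpa] assms by (simp add: tmult_eq_param_t_mult)

theorem mainTheorem4:
  fixes Hpa Hp Ha H :: sf
  assumes "Hpa = sf_mult sf_p1
             (sf_pleth (sf_susp sf_Assoc) (sf_pleth sf_Comm (sf_minus sf_p1 (sf_tmult Hpa))))"
    and "Hp = sf_mult sf_p1
             (sf_pleth (sf_susp sf_Lie) (sf_pleth sf_Comm (sf_minus sf_p1 (sf_tmult Hpa))))"
    and "Ha = sf_pleth (sf_minus sf_Comm sf_p1) (sf_minus sf_p1 (sf_tmult Hpa))"
    and "H = sf_minus (sf_add Hp Ha) Hpa"
  shows "Hp = sf_mult sf_p1 (sf_dp1 H)"
  using HAL_p_eq_p1_dp1_HAL[untransferred, OF assms] .

end
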